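(* For all formulas $\alpha,\beta$, the following hold in ${\bf Km}$: (i) $\Box \alpha, \Diamond \alpha, \Diamond \neg \beta \vdash_{\bf Km} \Diamond \neg (\alpha \to \beta)$; (ii) $\Diamond \alpha, \Box \neg \beta, \Diamond \neg \beta \vdash_{\bf Km} \Diamond \neg (\alpha \to \beta)$; (iii) $\Box \alpha, \Diamond \alpha, \Box \neg \beta \vdash_{\bf Km} \Box \neg(\alpha \to \beta)$; (iv) $\Diamond \alpha, \Diamond \beta \vdash_{\bf Km} \Diamond(\alpha \to \beta)$; (v) $\Diamond \neg \alpha, \Diamond \beta \vdash_{\bf Km} \Diamond(\alpha \to \beta)$; (vi) $\Diamond \neg \alpha, \Diamond \neg \beta \vdash_{\bf Km} \Diamond(\alpha \to \beta)$.
   Context: Formulas are built from a denumerable set of propositional variables by the unary connectives $\neg$, $\Box$ and the binary connective $\to$; $For$ is the set of all formulas. Abbreviations: $\Diamond\alpha:=\neg\Box\neg\alpha$, $\alpha\vee\beta:=\neg\alpha\to\beta$, $\alpha\wedge\beta:=\neg(\alpha\to\neg\beta)$. ${\bf Km}$ is the Hilbert calculus whose axioms are all instances (over $For$) of the axiom schemas of a standard Hilbert calculus for classical propositional logic in the signature $\{\neg,\to\}$, plus all instances of: (K') $\Diamond\alpha\to(\Box(\alpha\to\beta)\to(\Box\alpha\to\Box\beta))$; (K1') $\Diamond\neg\beta\to(\Box(\alpha\to\beta)\to(\Diamond\alpha\to\Diamond\beta))$; (K2') $\Diamond\alpha\to(\Diamond(\alpha\to\beta)\to(\Box\alpha\to\Diamond\beta))$;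 (M3') $(\Diamond\alpha\vee\Diamond\neg\alpha)\to(\Diamond\beta\to\Diamond(\alpha\to\beta))$; (M4') $\Diamond\neg\beta\to(\Diamond\neg\alpha\to\Diamond(\alpha\to\beta))$; (I1) $(\Box\alpha\wedge\Box\neg\alpha)\to(\Box(\alpha\to\beta)\wedge\Box\neg(\alpha\to\beta))$; (I2) $(\Box\beta\wedge\Box\neg\beta)\to(\Box(\alpha\to\beta)\wedge\Box\neg(\alpha\to\beta))$; (M1) $\neg\Diamond\alpha\to\Box(\alpha\to\beta)$; (M2) $\Box\beta\to\Box(\alpha\to\beta)$; (DN1) $\Box\alpha\to\Box\neg\neg\alpha$; (DN2) $\Box\neg\neg\alpha\to\Box\alpha$. Modus ponens is the only rule; $\Gamma\vdash_{\bf Km}\alpha$ means there is a derivation of $\alpha$ from $\Gamma$. *)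

theory Defs
  imports Main
begin

datatype form = Var nat | Neg form | Box form | Imp form form

definition Dia :: "form \<Rightarrow> form" where "Dia a = Neg (Box (Neg a))"
definition Or :: "form \<Rightarrow> form \<Rightarrow> form" where "Or a b = Imp (Neg a) b"
definition And :: "form \<Rightarrow> form \<Rightarrow> form" where "And a b = Neg (Imp a (Neg b))"

text \<open>Axioms of Km: a standard Hilbert calculus for CPL in {neg, imp}
  (Lukasiewicz's axioms A1-A3) plus the modal schemas.\<close>
inductive Km_axiom :: "form \<Rightarrow> bool" where
  A1: "Km_axiom (Imp a (Imp b a))"
| A2: "Km_axiom (Imp (Imp a (Imp b c)) (Imp (Imp a b) (Imp a c)))"
| A3: "Km_axiom (Imp (Imp (Neg a) (Neg b)) (Imp b a))"
| K': "Km_axiom (Imp (Dia a) (Imp (Box (Imp a b)) (Imp (Box a) (Box b))))"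
| K1': "Km_axiom (Imp (Dia (Neg b)) (Imp (Box (Imp a b)) (Imp (Dia a) (Dia b))))"
| K2': "Km_axiom (Imp (Dia a) (Imp (Dia (Imp a b)) (Imp (Box a) (Dia b))))"
| M3': "Km_axiom (Imp (Or (Dia a) (Dia (Neg a))) (Imp (Dia b) (Dia (Imp a b))))"
| M4': "Km_axiom (Imp (Dia (Neg b)) (Imp (Dia (Neg a)) (Dia (Imp a b))))"
| I1: "Km_axiom (Imp (And (Box a) (Box (Neg a))) (And (Box (Imp a b)) (Box (Neg (Imp a b)))))"
| I2: "Km_axiom (Imp (And (Box b) (Box (Neg b))) (And (Box (Imp a b)) (Box (Neg (Imp a b)))))"
| M1: "Km_axiom (Imp (Neg (Dia a)) (Box (Imp a b)))"
| M2: "Km_axiom (Imp (Box b) (Box (Imp a b)))"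
| DN1: "Km_axiom (Imp (Box a) (Box (Neg (Neg a))))"
| DN2: "Km_axiom (Imp (Box (Neg (Neg a))) (Box a))"

inductive Km_deriv :: "form set \<Rightarrow> form \<Rightarrow> bool" where
  prem: "a \<in> \<Gamma> \<Longrightarrow> Km_deriv \<Gamma> a"
| ax: "Km_axiom a \<Longrightarrow> Km_deriv \<Gamma> a"
| mp: "Km_deriv \<Gamma> a \<Longrightarrow> Km_deriv \<Gamma> (Imp a b) \<Longrightarrow> Km_deriv \<Gamma> b"

end

theory Submission
  imports Defs
begin

text \<open>Clauses (iv)-(vi) are single instances of
  M3' and M4'. For (i)-(iii) one assumes the opposite of the conclusion and refutes it: from
  \<open>\<Box>\<not>\<not>(\<alpha> \<rightarrow> \<beta>)\<close> the axioms DN2 and K' (resp. K1') yield \<open>\<Box>\<beta>\<close> (resp. \<open>\<Diamond>\<beta>\<close>), and from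
  \<open>\<Diamond>(\<alpha> \<rightarrow> \<beta>)\<close> the axiom K2' yields \<open>\<Diamond>\<beta>\<close>, each contradicting a premise; the classical
  part of the calculus (deduction theorem, reductio) turns these refutations into derivations.\<close>

lemma Km_deriv_mono: "Km_deriv \<Gamma> p \<Longrightarrow> \<Gamma> \<subseteq> \<Delta> \<Longrightarrow> Km_deriv \<Delta> p"
  by (induction rule: Km_deriv.induct) (auto intro: Km_deriv.intros)

lemma Km_deriv_insertI: "Km_deriv \<Gamma> p \<Longrightarrow> Km_deriv (insert q \<Gamma>) p"
  using Km_deriv_mono by blast

lemma Km_deriv_mp2:
  "Km_deriv \<Gamma> (Imp p (Imp q r)) \<Longrightarrow> Km_deriv \<Gamma> p \<Longrightarrow> Km_deriv \<Gamma> q \<Longrightarrow> Km_deriv \<Gamma> r"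
  by (rule Km_deriv.mp[OF _ Km_deriv.mp])

lemma Km_deriv_mp3:
  "Km_deriv \<Gamma> (Imp p (Imp q (Imp r s))) \<Longrightarrow> Km_deriv \<Gamma> p \<Longrightarrow> Km_deriv \<Gamma> q \<Longrightarrow> Km_deriv \<Gamma> r
    \<Longrightarrow> Km_deriv \<Gamma> s"
  by (rule Km_deriv.mp[OF _ Km_deriv_mp2])

lemma Km_deriv_imp_refl: "Km_deriv \<Gamma> (Imp p p)"
  by (rule Km_deriv_mp2[OF Km_deriv.ax[OF Km_axiom.A2]
        Km_deriv.ax[OF Km_axiom.A1] Km_deriv.ax[OF Km_axiom.A1]])

lemma Km_deriv_weaken_imp: "Km_deriv \<Gamma> q \<Longrightarrow> Km_deriv \<Gamma> (Imp p q)"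
  by (rule Km_deriv.mp[OF _ Km_deriv.ax[OF Km_axiom.A1]])

lemma Km_deriv_contrapos: "Km_deriv \<Gamma> (Imp (Neg p) (Neg q)) \<Longrightarrow> Km_deriv \<Gamma> (Imp q p)"
  by (rule Km_deriv.mp[OF _ Km_deriv.ax[OF Km_axiom.A3]])

lemma Km_deduction:
  assumes "Km_deriv (insert p \<Gamma>) q"
  shows "Km_deriv \<Gamma> (Imp p q)"
proof -
  have "Km_deriv \<Delta> q \<Longrightarrow> \<Delta> = insert p \<Gamma> \<Longrightarrow> Km_deriv \<Gamma> (Imp p q)" for \<Delta>
  proof (induction rule: Km_deriv.induct)
    case (prem a \<Delta>)
    show ?case
    proof (cases "a = p")
      case True
      then show ?thesis by (simp add: Km_deriv_imp_refl)
    next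
      case False
      with prem have "a \<in> \<Gamma>" by simp
      then show ?thesis by (intro Km_deriv_weaken_imp Km_deriv.prem)
    qed
  next
    case (ax a \<Delta>)
    then show ?case by (intro Km_deriv_weaken_imp Km_deriv.ax)
  next
    case (mp \<Delta> a b)
    then show ?case by (simp add: Km_deriv_mp2[OF Km_deriv.ax[OF Km_axiom.A2]])
  qed
  with assms show ?thesis by blast
qed

lemma Km_deriv_explosion: "Km_deriv \<Gamma> (Neg p) \<Longrightarrow> Km_deriv \<Gamma> p \<Longrightarrow> Km_deriv \<Gamma> q"
  by (rule Km_deriv.mp[OF _ Km_deriv_contrapos[OF Km_deriv_weaken_imp]])

lemma Km_deriv_double_neg_elim:
  assumes "Km_deriv \<Gamma> (Neg (Neg p))"
  shows "Km_deriv \<Gamma> p"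
proof -
  have "Km_deriv \<Gamma> (Imp (Neg (Neg (Neg (Neg p)))) (Neg (Neg p)))"
    using assms by (rule Km_deriv_weaken_imp)
  then have "Km_deriv \<Gamma> (Imp (Neg (Neg p)) p)"
    by (rule Km_deriv_contrapos[OF Km_deriv_contrapos])
  with assms show ?thesis by (rule Km_deriv.mp)
qed

lemma Km_deriv_NegI:
  assumes "Km_deriv (insert p \<Gamma>) q" "Km_deriv (insert p \<Gamma>) (Neg q)"
  shows "Km_deriv \<Gamma> (Neg p)"
proof -
  \<comment> \<open>Refute \<open>\<not>\<not>p\<close> rather than \<open>p\<close>, so that A3 turns the refutation into \<open>(p \<rightarrow> p) \<rightarrow> \<not>p\<close>.\<close>
  let ?\<Delta> = "insert (Neg (Neg p)) \<Gamma>"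
  have p: "Km_deriv ?\<Delta> p" by (rule Km_deriv_double_neg_elim, rule Km_deriv.prem) simp
  have imp: "Km_deriv ?\<Delta> (Imp p q)"
    using Km_deduction[OF assms(1)] by (rule Km_deriv_insertI)
  have imp_neg: "Km_deriv ?\<Delta> (Imp p (Neg q))"
    using Km_deduction[OF assms(2)] by (rule Km_deriv_insertI)
  have "Km_deriv ?\<Delta> (Neg (Imp p p))"
    by (rule Km_deriv_explosion[OF Km_deriv.mp[OF p imp_neg] Km_deriv.mp[OF p imp]])
  then have "Km_deriv \<Gamma> (Imp (Imp p p) (Neg p))"
    by (rule Km_deriv_contrapos[OF Km_deduction])
  then show ?thesis by (rule Km_deriv.mp[OF Km_deriv_imp_refl])
qed

lemma Km_deriv_OrI1:
  assumes "Km_deriv \<Gamma> p"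
  shows "Km_deriv \<Gamma> (Or p q)"
  unfolding Or_def
proof (rule Km_deduction)
  show "Km_deriv (insert (Neg p) \<Gamma>) q"
    by (rule Km_deriv_explosion[OF Km_deriv.prem Km_deriv_insertI[OF assms]]) simp
qed

lemma Km_deriv_OrI2: "Km_deriv \<Gamma> q \<Longrightarrow> Km_deriv \<Gamma> (Or p q)"
  unfolding Or_def by (rule Km_deriv_weaken_imp)

lemma Km_Box_of_Box_neg_neg: "Km_deriv \<Gamma> (Box (Neg (Neg p))) \<Longrightarrow> Km_deriv \<Gamma> (Box p)"
  by (rule Km_deriv.mp[OF _ Km_deriv.ax[OF Km_axiom.DN2]])

lemma Km_Box_neg_neg_of_Box: "Km_deriv \<Gamma> (Box p) \<Longrightarrow> Km_deriv \<Gamma> (Box (Neg (Neg p)))"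
  by (rule Km_deriv.mp[OF _ Km_deriv.ax[OF Km_axiom.DN1]])

lemma Km_Dia_Neg_ImpI_Box:
  assumes "Km_deriv \<Gamma> (Box a)" "Km_deriv \<Gamma> (Dia a)" "Km_deriv \<Gamma> (Dia (Neg b))"
  shows "Km_deriv \<Gamma> (Dia (Neg (Imp a b)))"
  unfolding Dia_def[of "Neg (Imp a b)"]
proof (rule Km_deriv_NegI)
  let ?\<Delta> = "insert (Box (Neg (Neg (Imp a b)))) \<Gamma>"
  have box_imp: "Km_deriv ?\<Delta> (Box (Imp a b))"
    by (rule Km_Box_of_Box_neg_neg, rule Km_deriv.prem) simp
  have box: "Km_deriv ?\<Delta> (Box a)" and dia: "Km_deriv ?\<Delta> (Dia a)"
    using assms(1,2) by (auto intro: Km_deriv_insertI)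
  have "Km_deriv ?\<Delta> (Box b)"
    by (rule Km_deriv_mp3[OF Km_deriv.ax[OF Km_axiom.K'] dia box_imp box])
  then show "Km_deriv ?\<Delta> (Box (Neg (Neg b)))" by (rule Km_Box_neg_neg_of_Box)
  show "Km_deriv ?\<Delta> (Neg (Box (Neg (Neg b))))"
    using assms(3) unfolding Dia_def by (rule Km_deriv_insertI)
qed

lemma Km_Dia_Neg_ImpI_Dia:
  assumes "Km_deriv \<Gamma> (Dia a)" "Km_deriv \<Gamma> (Box (Neg b))" "Km_deriv \<Gamma> (Dia (Neg b))"
  shows "Km_deriv \<Gamma> (Dia (Neg (Imp a b)))"
  unfolding Dia_def[of "Neg (Imp a b)"]
proof (rule Km_deriv_NegI)
  let ?\<Delta> = "insert (Box (Neg (Neg (Imp a b)))) \<Gamma>"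
  have box_imp: "Km_deriv ?\<Delta> (Box (Imp a b))"
    by (rule Km_Box_of_Box_neg_neg, rule Km_deriv.prem) simp
  have dia: "Km_deriv ?\<Delta> (Dia a)" and dia_neg: "Km_deriv ?\<Delta> (Dia (Neg b))"
    using assms(1,3) by (auto intro: Km_deriv_insertI)
  show "Km_deriv ?\<Delta> (Box (Neg b))" using assms(2) by (rule Km_deriv_insertI)
  have "Km_deriv ?\<Delta> (Dia b)"
    by (rule Km_deriv_mp3[OF Km_deriv.ax[OF Km_axiom.K1'] dia_neg box_imp dia])
  then show "Km_deriv ?\<Delta> (Neg (Box (Neg b)))" by (simp only: Dia_def)
qed

lemma Km_Box_Neg_ImpI:
  assumes "Km_deriv \<Gamma> (Box a)" "Km_deriv \<Gamma> (Dia a)" "Km_deriv \<Gamma> (Box (Neg b))"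
  shows "Km_deriv \<Gamma> (Box (Neg (Imp a b)))"
proof -
  let ?\<Delta> = "insert (Dia (Imp a b)) \<Gamma>"
  have dia_imp: "Km_deriv ?\<Delta> (Dia (Imp a b))" by (rule Km_deriv.prem) simp
  have box: "Km_deriv ?\<Delta> (Box a)" and dia: "Km_deriv ?\<Delta> (Dia a)"
    using assms(1,2) by (auto intro: Km_deriv_insertI)
  have "Km_deriv ?\<Delta> (Dia b)"
    by (rule Km_deriv_mp3[OF Km_deriv.ax[OF Km_axiom.K2'] dia dia_imp box])
  then have "Km_deriv ?\<Delta> (Neg (Box (Neg b)))" by (simp only: Dia_def)
  moreover have "Km_deriv ?\<Delta> (Box (Neg b))" using assms(3) by (rule Km_deriv_insertI)
  ultimately have "Km_deriv \<Gamma> (Neg (Dia (Imp a b)))" by (rule Km_deriv_NegI[rotated])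
  then show ?thesis unfolding Dia_def by (rule Km_deriv_double_neg_elim)
qed

lemma Km_Dia_ImpI:
  "Km_deriv \<Gamma> (Or (Dia a) (Dia (Neg a))) \<Longrightarrow> Km_deriv \<Gamma> (Dia b) \<Longrightarrow> Km_deriv \<Gamma> (Dia (Imp a b))"
  by (rule Km_deriv_mp2[OF Km_deriv.ax[OF Km_axiom.M3']])

lemma Km_Dia_ImpI_Neg:
  "Km_deriv \<Gamma> (Dia (Neg b)) \<Longrightarrow> Km_deriv \<Gamma> (Dia (Neg a)) \<Longrightarrow> Km_deriv \<Gamma> (Dia (Imp a b))"
  by (rule Km_deriv_mp2[OF Km_deriv.ax[OF Km_axiom.M4']])

theorem mainTheorem19:
  fixes a b :: form
  shows "Km_deriv {Box a, Dia a, Dia (Neg b)} (Dia (Neg (Imp a b))) \<and>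
    Km_deriv {Dia a, Box (Neg b), Dia (Neg b)} (Dia (Neg (Imp a b))) \<and>
    Km_deriv {Box a, Dia a, Box (Neg b)} (Box (Neg (Imp a b))) \<and>
    Km_deriv {Dia a, Dia b} (Dia (Imp a b)) \<and>
    Km_deriv {Dia (Neg a), Dia b} (Dia (Imp a b)) \<and>
    Km_deriv {Dia (Neg a), Dia (Neg b)} (Dia (Imp a b))"
proof (intro conjI)
  show "Km_deriv {Box a, Dia a, Dia (Neg b)} (Dia (Neg (Imp a b)))"
    by (rule Km_Dia_Neg_ImpI_Box; rule Km_deriv.prem; simp)
  show "Km_deriv {Dia a, Box (Neg b), Dia (Neg b)} (Dia (Neg (Imp a b)))"
    by (rule Km_Dia_Neg_ImpI_Dia; rule Km_deriv.prem; simp)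
  show "Km_deriv {Box a, Dia a, Box (Neg b)} (Box (Neg (Imp a b)))"
    by (rule Km_Box_Neg_ImpI; rule Km_deriv.prem; simp)
  show "Km_deriv {Dia a, Dia b} (Dia (Imp a b))"
    by (rule Km_Dia_ImpI[OF Km_deriv_OrI1]; rule Km_deriv.prem; simp)
  show "Km_deriv {Dia (Neg a), Dia b} (Dia (Imp a b))"
    by (rule Km_Dia_ImpI[OF Km_deriv_OrI2]; rule Km_deriv.prem; simp)
  show "Km_deriv {Dia (Neg a), Dia (Neg b)} (Dia (Imp a b))"
    by (rule Km_Dia_ImpI_Neg; rule Km_deriv.prem; simp)
qed

end
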